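(* Let $x_1,\dots,x_n$ be the values of the variables $x_i$ after the last iteration of Algorithm 1 on an instance of Problem (P). Then either $\sum_{i=1}^n z_ix_i=K$, or $x_i=q_i$ for every $i$.
   Context: Problem (P): given an integer $n\ge1$, reals $0<q_1\le\cdots\le q_n$, $z_1,\dots,z_n>0$ and $K>0$, maximize $\sum_{i=1}^n x_i$ subject to $0\le x_i\le q_i$ for all $i$, $0\le x_1\le x_2\le\cdots\le x_n$, and $\sum_{i=1}^n z_ix_i\le K$. For $1\le i<j\le n+1$ let $\mathrm{sum}(i,j)=z_i+z_{i+1}+\cdots+z_{j-1}$ and $\mathrm{avg}(i,j)=\mathrm{sum}(i,j)/(j-i)$. Algorithm 1: Initialize $S=\{0,n+1\}$, $y_i=\mathrm{avg}(i,n+1)$ and $x_i=0$ for $i=1,\dots,n$, and $\hat B=K$. While $\hat B>0$ and $S\ne\{0,1,\dots,n+1\}$, perform an iteration: let $i^*$ be the index $i\in\{1,\dots,n\}\setminus S$ minimizing $y_i$, ties broken in favour of the smallest index; let $i_L=\max\{j\in S:j<i^*\}$ and $i_R=\min\{j\in S:j>i^*\}$; set $d=\min\{\hat B/((i_R-i^* )y_{i^*}),\ q_{i^*}-x_{i^*}\}$; set $\hat B\leftarrow\hat B-d(i_R-i^* )y_{i^*}$; set $x_i\leftarrow x_i+d$ for all $i^*\le i<i_R$; set $y_i\leftarrow\mathrm{avg}(i,i^* )$ for all $i_L<i<i^*$; add $i^*$ to $S$. When the loop ends, output $x_1,\dots,x_n$. *)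

theory Defs
  imports Complex_Main
begin

text \<open>Problem (P) data: indices 1..n; q, z :: nat \<Rightarrow> real (values outside 1..n are irrelevant).\<close>

definition zsum :: "(nat \<Rightarrow> real) \<Rightarrow> nat \<Rightarrow> nat \<Rightarrow> real" where
  "zsum z i j = (\<Sum>k = i..<j. z k)"

definition zavg :: "(nat \<Rightarrow> real) \<Rightarrow> nat \<Rightarrow> nat \<Rightarrow> real" where
  "zavg z i j = zsum z i j / real (j - i)"

type_synonym alg_state = "nat set \<times> (nat \<Rightarrow> real) \<times> (nat \<Rightarrow> real) \<times> real"

definition alg_init :: "nat \<Rightarrow> (nat \<Rightarrow> real) \<Rightarrow> real \<Rightarrow> alg_state" where
  "alg_init n z K = ({0, n + 1}, (\<lambda>i. zavg z i (n + 1)), (\<lambda>i. 0), K)"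

definition alg_cond :: "nat \<Rightarrow> alg_state \<Rightarrow> bool" where
  "alg_cond n st = (case st of (S, y, x, B) \<Rightarrow> B > 0 \<and> S \<noteq> {0..n + 1})"

definition alg_iter :: "nat \<Rightarrow> (nat \<Rightarrow> real) \<Rightarrow> (nat \<Rightarrow> real) \<Rightarrow> alg_state \<Rightarrow> alg_state" where
  "alg_iter n q z st = (case st of (S, y, x, B) \<Rightarrow>
     let istar = (LEAST i. i \<in> {1..n} - S \<and> (\<forall>j \<in> {1..n} - S. y i \<le> y j));
         iL = Max {j \<in> S. j < istar};
         iR = Min {j \<in> S. j > istar};
         d = min (B / (real (iR - istar) * y istar)) (q istar - x istar);
         B' = B - d * real (iR - istar) * y istar;
         x' = (\<lambda>i. if istar \<le> i \<and> i < iR then x i + d else x i);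
         y' = (\<lambda>i. if iL < i \<and> i < istar then zavg z i istar else y i)
     in (insert istar S, y', x', B'))"

definition alg_step :: "nat \<Rightarrow> (nat \<Rightarrow> real) \<Rightarrow> (nat \<Rightarrow> real) \<Rightarrow> alg_state \<Rightarrow> alg_state" where
  "alg_step n q z st = (if alg_cond n st then alg_iter n q z st else st)"

text \<open>Every iteration adds a new element of {1..n} to S, so the loop performs at most n
  iterations; iterating the guarded step n times therefore yields the final state.\<close>
definition alg_final :: "nat \<Rightarrow> (nat \<Rightarrow> real) \<Rightarrow> (nat \<Rightarrow> real) \<Rightarrow> real \<Rightarrow> alg_state" where
  "alg_final n q z K = (alg_step n q z ^^ n) (alg_init n z K)"

definition alg_output :: "nat \<Rightarrow> (nat \<Rightarrow> real) \<Rightarrow> (nat \<Rightarrow> real) \<Rightarrow> real \<Rightarrow> nat \<Rightarrow> real" where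
  "alg_output n q z K = fst (snd (snd (alg_final n q z K)))"

end

theory Submission
  imports Defs
begin

(* The loop keeps B-hat equal to the unspent budget K - (SUM i. z i * x i) and nonnegative, and
   as long as B-hat > 0 every index of S in {1..n} satisfies x i = q i.  The reason is that
   y i is always avg(i, r) for the next element r of S above i, so raising x by d on the block
   [p, r) of the pivot p costs exactly d * sum(p, r) = d * (r - p) * y p; the choice of d then
   either exhausts the budget or saturates x p = q p, while the other indices of S lie outside
   the block.  Every iteration adds a fresh index to S, so after n guarded steps either
   B-hat = 0 or S contains {1..n}. *)

definition next_in :: "nat set \<Rightarrow> nat \<Rightarrow> nat" where
  "next_in S i = Min {j \<in> S. i < j}"

definition prev_in :: "nat set \<Rightarrow> nat \<Rightarrow> nat" where
  "prev_in S i = Max {j \<in> S. j < i}"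

lemma next_in_bounds:
  assumes "finite S" "j \<in> S" "i < j"
  shows "next_in S i \<in> S" "i < next_in S i" "next_in S i \<le> j"
proof -
  have "next_in S i \<in> {j \<in> S. i < j}"
    unfolding next_in_def using assms by (intro Min_in) auto
  then show "next_in S i \<in> S" "i < next_in S i" by auto
  show "next_in S i \<le> j" unfolding next_in_def using assms by (intro Min_le) auto
qed

lemma prev_in_bounds:
  assumes "finite S" "j \<in> S" "j < i"
  shows "prev_in S i \<in> S" "prev_in S i < i" "j \<le> prev_in S i"
proof -
  have "prev_in S i \<in> {j \<in> S. j < i}"
    unfolding prev_in_def using assms by (intro Max_in) auto
  then show "prev_in S i \<in> S" "prev_in S i < i" by auto
  show "j \<le> prev_in S i" unfolding prev_in_def using assms by (intro Max_ge) auto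
qed

lemma next_in_insert:
  assumes fin: "finite S" and below: "l \<in> S" "l < i" and above: "u \<in> S" "k < u"
    and "i \<notin> S" "k \<notin> S" "k \<noteq> i"
  shows "next_in (insert i S) k = (if prev_in S i < k \<and> k < i then i else next_in S k)"
proof -
  note pred = prev_in_bounds[OF fin below]
  note succ = next_in_bounds[OF fin above]
  have fin': "finite {j \<in> insert i S. k < j}" using fin by simp
  consider "i < k" | "prev_in S i < k \<and> k < i" | "k < prev_in S i"
    using \<open>k \<noteq> i\<close> \<open>k \<notin> S\<close> pred(1) by (metis linorder_neqE_nat)
  then show ?thesis
  proof cases
    case 1
    then have "{j \<in> insert i S. k < j} = {j \<in> S. k < j}" by auto
    with 1 show ?thesis by (simp add: next_in_def)
  next
    case 2
    have "i \<le> j" if "j \<in> S" "k < j" for j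
      using prev_in_bounds(3)[OF fin that(1), of i] 2 that \<open>i \<notin> S\<close>
      by (cases "j < i") auto
    then have "Min {j \<in> insert i S. k < j} = i"
      using 2 by (intro Min_eqI[OF fin']) auto
    with 2 show ?thesis by (simp add: next_in_def)
  next
    case 3
    have "next_in S k \<le> prev_in S i"
      using next_in_bounds(3)[OF fin pred(1) 3] .
    then have "Min {j \<in> insert i S. k < j} = next_in S k"
      using succ pred(2) next_in_bounds(3)[OF fin] by (intro Min_eqI[OF fin']) auto
    with 3 show ?thesis by (simp add: next_in_def)
  qed
qed

lemma sum_weighted_add_on_block:
  fixes z x :: "nat \<Rightarrow> real"
  assumes "1 \<le> a" "b \<le> n + 1"
  shows "(\<Sum>k = 1..n. z k * (if a \<le> k \<and> k < b then x k + d else x k))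
    = (\<Sum>k = 1..n. z k * x k) + d * zsum z a b"
proof -
  have "(\<Sum>k = 1..n. z k * (if a \<le> k \<and> k < b then x k + d else x k))
      = (\<Sum>k = 1..n. z k * x k + (if k \<in> {a..<b} then d * z k else 0))"
    by (intro sum.cong) (auto simp: algebra_simps)
  also have "\<dots> = (\<Sum>k = 1..n. z k * x k) + (\<Sum>k \<in> {1..n} \<inter> {a..<b}. d * z k)"
    by (simp add: sum.distrib sum.inter_restrict)
  also have "{1..n} \<inter> {a..<b} = {a..<b}" using assms by auto
  finally show ?thesis by (simp add: zsum_def sum_distrib_left)
qed

lemma min_budget_step:
  fixes B s c :: real
  assumes "0 < s" "0 \<le> B"
  shows "0 \<le> B - min (B / s) c * s" and "B - min (B / s) c * s = 0 \<or> min (B / s) c = c"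
  using assms by (auto simp: min_def field_simps)

definition pivot :: "nat \<Rightarrow> nat set \<Rightarrow> (nat \<Rightarrow> real) \<Rightarrow> nat" where
  "pivot n S y = (LEAST i. i \<in> {1..n} - S \<and> (\<forall>j \<in> {1..n} - S. y i \<le> y j))"

lemma pivot_mem:
  assumes "{1..n} - S \<noteq> {}"
  shows "pivot n S y \<in> {1..n} - S"
proof -
  let ?m = "arg_min_on y ({1..n} - S)"
  have "?m \<in> {1..n} - S \<and> (\<forall>j \<in> {1..n} - S. y ?m \<le> y j)"
    using assms arg_min_if_finite(1) arg_min_least by (metis finite_Diff finite_atLeastAtMost)
  then show ?thesis unfolding pivot_def by (rule conjunct1[OF LeastI])
qed

lemma alg_iter_eq:
  "alg_iter n q z (S, y, x, B) =
    (let i = pivot n S y; r = next_in S i; d = min (B / (real (r - i) * y i)) (q i - x i)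
     in (insert i S, \<lambda>k. if prev_in S i < k \<and> k < i then zavg z k i else y k,
         \<lambda>k. if i \<le> k \<and> k < r then x k + d else x k, B - d * real (r - i) * y i))"
  by (simp add: alg_iter_def pivot_def prev_in_def next_in_def Let_def)

definition alg_invariant :: "nat \<Rightarrow> (nat \<Rightarrow> real) \<Rightarrow> (nat \<Rightarrow> real) \<Rightarrow> real \<Rightarrow> alg_state \<Rightarrow> bool" where
  "alg_invariant n q z K st = (case st of (S, y, x, B) \<Rightarrow>
     0 \<in> S \<and> n + 1 \<in> S \<and> S \<subseteq> {0..n + 1}
     \<and> (\<forall>i \<in> {1..n} - S. y i = zavg z i (next_in S i))
     \<and> B = K - (\<Sum>i = 1..n. z i * x i) \<and> 0 \<le> B
     \<and> (B = 0 \<or> (\<forall>i \<in> S \<inter> {1..n}. x i = q i)))"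

lemma alg_invariant_init:
  assumes "0 \<le> K"
  shows "alg_invariant n q z K (alg_init n z K)"
proof -
  have "{j \<in> {0, n + 1}. i < j} = {n + 1}" if "i \<le> n" for i
    using that by auto
  then have "next_in {0, n + 1} i = n + 1" if "i \<le> n" for i
    using that by (simp add: next_in_def)
  with assms show ?thesis by (simp add: alg_invariant_def alg_init_def)
qed

lemma alg_cond_free_index:
  assumes "alg_invariant n q z K (S, y, x, B)" "alg_cond n (S, y, x, B)"
  shows "{1..n} - S \<noteq> {}"
proof
  assume "{1..n} - S = {}"
  moreover have "{0..n + 1} = {0, n + 1} \<union> {1..n}" by auto
  ultimately have "S = {0..n + 1}" using assms(1) by (auto simp: alg_invariant_def)
  with assms(2) show False by (simp add: alg_cond_def)
qed

lemma alg_pivot_block: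
  assumes inv: "alg_invariant n q z K (S, y, x, B)" and cond: "alg_cond n (S, y, x, B)"
    and z_pos: "\<forall>k \<in> {1..n}. 0 < z k"
  defines "i \<equiv> pivot n S y" and "r \<equiv> next_in S (pivot n S y)"
  shows "i \<in> {1..n} - S" "r \<in> S" "i < r" "r \<le> n + 1" "\<forall>k \<in> S. i < k \<longrightarrow> r \<le> k"
    and "0 < zsum z i r" "real (r - i) * y i = zsum z i r"
proof -
  from inv have S: "n + 1 \<in> S" "S \<subseteq> {0..n + 1}"
    and y: "\<forall>k \<in> {1..n} - S. y k = zavg z k (next_in S k)"
    by (auto simp: alg_invariant_def)
  have fin: "finite S" using S(2) finite_subset by blast
  show i: "i \<in> {1..n} - S"
    unfolding i_def using pivot_mem alg_cond_free_index[OF inv cond] by blast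
  show r: "r \<in> S" "i < r" "r \<le> n + 1" "\<forall>k \<in> S. i < k \<longrightarrow> r \<le> k"
    using next_in_bounds[OF fin S(1)] next_in_bounds(3)[OF fin] i S(2) by (auto simp: r_def i_def)
  show "0 < zsum z i r"
    unfolding zsum_def using i r(2,3) z_pos by (intro sum_pos) auto
  show "real (r - i) * y i = zsum z i r"
    using y i r(2) by (simp add: zavg_def r_def i_def)
qed

lemma alg_iter_preserves_invariant:
  assumes inv: "alg_invariant n q z K (S, y, x, B)" and cond: "alg_cond n (S, y, x, B)"
    and z_pos: "\<forall>k \<in> {1..n}. 0 < z k"
  shows "alg_invariant n q z K (alg_iter n q z (S, y, x, B))"
proof -
  from inv have S: "0 \<in> S" "n + 1 \<in> S" "S \<subseteq> {0..n + 1}"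
    and y: "\<forall>k \<in> {1..n} - S. y k = zavg z k (next_in S k)"
    and B: "B = K - (\<Sum>k = 1..n. z k * x k)" "0 \<le> B"
    and fixed: "B = 0 \<or> (\<forall>k \<in> S \<inter> {1..n}. x k = q k)"
    by (auto simp: alg_invariant_def)
  have fin: "finite S" using S(3) finite_subset by blast
  from cond have "0 < B" by (simp add: alg_cond_def)
  define i where "i = pivot n S y"
  define r where "r = next_in S i"
  define d where "d = min (B / (real (r - i) * y i)) (q i - x i)"
  define x' where "x' = (\<lambda>k. if i \<le> k \<and> k < r then x k + d else x k)"
  note block = alg_pivot_block[OF inv cond z_pos, folded i_def, folded r_def]
  have iter: "alg_iter n q z (S, y, x, B) =
      (insert i S, \<lambda>k. if prev_in S i < k \<and> k < i then zavg z k i else y k, x', B - d * zsum z i r)"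
    unfolding alg_iter_eq Let_def i_def[symmetric] r_def[symmetric] d_def[symmetric]
    by (simp add: block(7) x'_def mult.assoc)
  have y': "(if prev_in S i < k \<and> k < i then zavg z k i else y k) = zavg z k (next_in (insert i S) k)"
    if "k \<in> {1..n} - insert i S" for k
    using next_in_insert[OF fin S(1) _ S(2), of i k] y that block(1) by auto
  have sum': "(\<Sum>k = 1..n. z k * x' k) = (\<Sum>k = 1..n. z k * x k) + d * zsum z i r"
    unfolding x'_def using sum_weighted_add_on_block block(1,4) by auto
  have budget: "0 \<le> B - d * zsum z i r" "B - d * zsum z i r = 0 \<or> d = q i - x i"
    using min_budget_step[OF block(6) B(2)] by (simp_all add: d_def block(7))
  have "\<forall>k \<in> insert i S \<inter> {1..n}. x' k = q k" if "d = q i - x i"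
  proof
    fix k assume k: "k \<in> insert i S \<inter> {1..n}"
    show "x' k = q k"
    proof (cases "k = i")
      case False
      then have "\<not> (i \<le> k \<and> k < r)" using k block(5) by force
      then show ?thesis using k False fixed \<open>0 < B\<close> by (auto simp: x'_def)
    qed (use that block(3) in \<open>simp add: x'_def\<close>)
  qed
  with budget have "B - d * zsum z i r = 0 \<or> (\<forall>k \<in> insert i S \<inter> {1..n}. x' k = q k)"
    by blast
  then show ?thesis
    unfolding iter alg_invariant_def using S block(1) y' sum' B budget by auto
qed

lemma alg_iter_inserts_pivot: "fst (alg_iter n q z (S, y, x, B)) = insert (pivot n S y) S"
  by (simp add: alg_iter_eq Let_def)

lemma alg_step_power:
  assumes "alg_invariant n q z K st" and z_pos: "\<forall>k \<in> {1..n}. 0 < z k"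
  shows "alg_invariant n q z K ((alg_step n q z ^^ m) st)
    \<and> (alg_cond n ((alg_step n q z ^^ m) st) \<longrightarrow> m \<le> card (fst ((alg_step n q z ^^ m) st) \<inter> {1..n}))"
proof (induction m)
  case 0
  with assms show ?case by simp
next
  case (Suc m)
  obtain S y x B where st: "(alg_step n q z ^^ m) st = (S, y, x, B)"
    by (cases "(alg_step n q z ^^ m) st") auto
  have step: "(alg_step n q z ^^ Suc m) st = alg_step n q z (S, y, x, B)"
    using st by simp
  show ?case
  proof (cases "alg_cond n (S, y, x, B)")
    case True
    with Suc.IH st have inv: "alg_invariant n q z K (S, y, x, B)" and "m \<le> card (S \<inter> {1..n})"
      by auto
    moreover have "pivot n S y \<in> {1..n} - S"
      using pivot_mem alg_cond_free_index[OF inv True] by blast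
    ultimately have "Suc m \<le> card (insert (pivot n S y) S \<inter> {1..n})"
      using finite_subset[of "S \<inter> {1..n}"] by (simp add: Int_insert_left)
    with True show ?thesis
      using alg_iter_preserves_invariant[OF inv True z_pos]
      unfolding step by (simp add: alg_step_def alg_iter_inserts_pivot)
  next
    case False
    then have "alg_step n q z (S, y, x, B) = (S, y, x, B)" by (simp add: alg_step_def)
    with Suc.IH st False show ?thesis unfolding step by simp
  qed
qed

lemma alg_invariant_terminal:
  assumes inv: "alg_invariant n q z K (S, y, x, B)"
    and stop: "\<not> alg_cond n (S, y, x, B) \<or> n \<le> card (S \<inter> {1..n})"
  shows "(\<Sum>i = 1..n. z i * x i) = K \<or> (\<forall>i \<in> {1..n}. x i = q i)"
proof -
  have "B = 0 \<or> {1..n} \<subseteq> S"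
  proof (cases "alg_cond n (S, y, x, B)")
    case True
    with stop have "n \<le> card (S \<inter> {1..n})" by simp
    moreover have "card (S \<inter> {1..n}) \<le> n" using card_mono[of "{1..n}" "S \<inter> {1..n}"] by auto
    ultimately have "S \<inter> {1..n} = {1..n}" by (intro card_subset_eq) auto
    then show ?thesis by auto
  next
    case False
    with inv show ?thesis by (auto simp: alg_cond_def alg_invariant_def)
  qed
  with inv show ?thesis by (auto simp: alg_invariant_def)
qed

theorem lemma4:
  fixes n :: nat and q z :: "nat \<Rightarrow> real" and K :: real
  assumes "n \<ge> 1"
    and "\<forall>i \<in> {1..n}. 0 < q i"
    and "\<forall>i j. 1 \<le> i \<and> i \<le> j \<and> j \<le> n \<longrightarrow> q i \<le> q j"
    and "\<forall>i \<in> {1..n}. 0 < z i"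
    and "K > 0"
  shows "(\<Sum>i = 1..n. z i * alg_output n q z K i) = K
         \<or> (\<forall>i \<in> {1..n}. alg_output n q z K i = q i)"
proof -
  obtain S y x B where final: "alg_final n q z K = (S, y, x, B)"
    by (cases "alg_final n q z K") auto
  have "alg_invariant n q z K (S, y, x, B)" "\<not> alg_cond n (S, y, x, B) \<or> n \<le> card (S \<inter> {1..n})"
    using alg_step_power[OF alg_invariant_init assms(4), of K q n] final assms(5)
    by (auto simp: alg_final_def)
  then have "(\<Sum>i = 1..n. z i * x i) = K \<or> (\<forall>i \<in> {1..n}. x i = q i)"
    by (rule alg_invariant_terminal)
  with final show ?thesis by (simp add: alg_output_def)
qed

end
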